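(* Let $n,m$ be positive integers, $Q$ an integer valued positive definite quadratic form on $\mathbb{Z}^n$, and $1=m_1<\cdots<m_l=m$ the positive divisors of $m$. Let $S_i=\{(k_1,\dots,k_n)\in\mathbb{Z}^n:\gcd(k_1,m)=m_i\}$ and $T_i=\{(k_1,\dots,k_n)\in\mathbb{Z}^n:m_i\mid k_1\}$, and for a subset $T\subset\mathbb{Z}^n$ set $\Theta_{Q,T}(q)=\sum_{(k_1,\dots,k_n)\in T}q^{Q(k_1,\dots,k_n)}$. Then for each $i$, both $\Theta_{Q,T_i}(q)$ and $\Theta_{Q,S_i}(q)$ are $\mathbb{Z}$-linear combinations of theta series $\Theta_{Q'}(q)=\sum_{k\in\mathbb{Z}^n}q^{Q'(k)}$ of integer valued positive definite quadratic forms $Q'$ on $\mathbb{Z}^n$.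
   Context: An integer valued positive definite quadratic form on $\mathbb{Z}^n$ is a quadratic form taking integer values on $\mathbb{Z}^n$ and positive definite over $\mathbb{R}$. *)

theory Defs
  imports Complex_Main "HOL-Computational_Algebra.Formal_Power_Series"
begin

text \<open>Integer vectors in Z^n, represented as functions nat => int that vanish
  outside the index range {0..<n}. The paper's coordinate k_1 is k 0.\<close>
definition zvecs :: "nat \<Rightarrow> (nat \<Rightarrow> int) set" where
  "zvecs n = {k. \<forall>i\<ge>n. k i = 0}"

definition int_pd_qf :: "nat \<Rightarrow> ((nat \<Rightarrow> int) \<Rightarrow> int) \<Rightarrow> bool" where
  "int_pd_qf n Q \<longleftrightarrow>
     (\<exists>A :: nat \<Rightarrow> nat \<Rightarrow> real.
        (\<forall>i j. A i j = A j i) \<and>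
        (\<forall>k\<in>zvecs n. real_of_int (Q k) =
            (\<Sum>i<n. \<Sum>j<n. A i j * real_of_int (k i) * real_of_int (k j))) \<and>
        (\<forall>x :: nat \<Rightarrow> real. (\<exists>i<n. x i \<noteq> 0) \<longrightarrow>
            (\<Sum>i<n. \<Sum>j<n. A i j * x i * x j) > 0))"

text \<open>Theta_{Q,T}(q) = sum over k in T of q^{Q(k)}, as a formal power series:
  the coefficient of q^N is the number of k in T with Q(k) = N.\<close>
definition theta_set :: "((nat \<Rightarrow> int) \<Rightarrow> int) \<Rightarrow> (nat \<Rightarrow> int) set \<Rightarrow> int fps" where
  "theta_set Q T = Abs_fps (\<lambda>N. int (card {k\<in>T. Q k = int N}))"

definition theta :: "nat \<Rightarrow> ((nat \<Rightarrow> int) \<Rightarrow> int) \<Rightarrow> int fps" where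
  "theta n Q = theta_set Q (zvecs n)"

definition Z_comb_thetas :: "nat \<Rightarrow> int fps \<Rightarrow> bool" where
  "Z_comb_thetas n F \<longleftrightarrow>
     (\<exists>cs :: (int \<times> ((nat \<Rightarrow> int) \<Rightarrow> int)) list.
        (\<forall>(c, Q')\<in>set cs. int_pd_qf n Q') \<and>
        F = (\<Sum>(c, Q')\<leftarrow>cs. fps_const c * theta n Q'))"

end

theory Submission
  imports Defs "HOL-Analysis.Analysis"
begin

text \<open>Positive definiteness gives \<open>Q(k) \<ge> c \<cdot> max\<^sub>i k\<^sub>i\<^sup>2\<close> for some \<open>c > 0\<close>, so each coefficient
  of a theta series counts a finite set and theta series add over disjoint unions.
  Rescaling the first coordinate by \<open>d\<close> is a bijection from \<open>\<int>\<^sup>n\<close> onto \<open>T\<^sub>d\<close> that turns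
  \<open>Q\<close> into another positive definite form, so \<open>\<Theta>\<^sub>Q\<^sub>,\<^sub>T\<^sub>d\<close> is itself a theta series.
  Finally \<open>T\<^sub>d\<close> is the disjoint union of the \<open>S\<^sub>e\<close> over the divisors \<open>e\<close> of \<open>m\<close> divisible by
  \<open>d\<close>, which expresses \<open>\<Theta>\<^sub>Q\<^sub>,\<^sub>S\<^sub>d\<close> through \<open>\<Theta>\<^sub>Q\<^sub>,\<^sub>T\<^sub>d\<close> and the \<open>\<Theta>\<^sub>Q\<^sub>,\<^sub>S\<^sub>e\<close> with \<open>e > d\<close>;
  induction downwards over the divisors finishes the proof.\<close>

definition qform :: "nat \<Rightarrow> (nat \<Rightarrow> nat \<Rightarrow> real) \<Rightarrow> (nat \<Rightarrow> real) \<Rightarrow> real" where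
  "qform n A x = (\<Sum>i<n. \<Sum>j<n. A i j * x i * x j)"

lemma int_pd_qf_iff:
  "int_pd_qf n Q \<longleftrightarrow>
     (\<exists>A. (\<forall>i j. A i j = A j i) \<and>
          (\<forall>k\<in>zvecs n. real_of_int (Q k) = qform n A (\<lambda>i. real_of_int (k i))) \<and>
          (\<forall>x. (\<exists>i<n. x i \<noteq> 0) \<longrightarrow> qform n A x > 0))"
  by (simp add: int_pd_qf_def qform_def)

lemma qform_cong: "(\<And>i. i < n \<Longrightarrow> x i = y i) \<Longrightarrow> qform n A x = qform n A y"
  unfolding qform_def by (intro sum.cong) auto

lemma qform_rescale_coords:
  "qform n A (\<lambda>i. s i * x i) = qform n (\<lambda>i j. A i j * s i * s j) x"
  unfolding qform_def by (intro sum.cong refl) (simp add: ac_simps)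

lemma qform_scaleR: "qform n A (\<lambda>i. c * x i) = c\<^sup>2 * qform n A x"
  unfolding qform_def by (simp add: sum_distrib_left power2_eq_square ac_simps)

lemma compact_unit_box:
  "compact (PiE UNIV (\<lambda>i. if i < n then {-1..1} else {0::real}))"
proof -
  have "compactin (product_topology (\<lambda>_. euclidean) UNIV)
          (PiE UNIV (\<lambda>i. if i < n then {-1..1} else {0::real}))"
    unfolding compactin_PiE by auto
  then show ?thesis by (simp add: euclidean_product_topology compactin_euclidean_iff)
qed

lemma pos_def_qform_min_on_cube_boundary:
  assumes pd: "\<And>x. (\<exists>i<n. x i \<noteq> 0) \<Longrightarrow> qform n A x > 0" and "i0 < n"
  shows "\<exists>c>0. \<forall>x. (\<forall>i<n. \<bar>x i\<bar> \<le> 1) \<longrightarrow> (\<exists>i<n. \<bar>x i\<bar> = 1) \<longrightarrow> c \<le> qform n A x"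
proof -
  define K where "K = PiE UNIV (\<lambda>i. if i < n then {-1..1} else {0::real})
                      \<inter> (\<Union>i<n. {x. \<bar>x i\<bar> = 1})"
  have "closed {x::nat \<Rightarrow> real. \<bar>x i\<bar> = 1}" for i
    by (intro closed_Collect_eq continuous_intros continuous_on_product_then_coordinatewise
        continuous_on_id)
  then have "closed (\<Union>i<n. {x::nat \<Rightarrow> real. \<bar>x i\<bar> = 1})"
    by (intro closed_UN) auto
  then have "compact K"
    unfolding K_def by (rule compact_Int_closed[OF compact_unit_box])
  moreover have "(\<lambda>i. if i = i0 then 1 else 0) \<in> K"
    using \<open>i0 < n\<close> unfolding K_def by auto
  moreover have "continuous_on K (qform n A)"
    unfolding qform_def[abs_def]
    by (intro continuous_intros continuous_on_product_then_coordinatewise continuous_on_id)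
  ultimately obtain x0 where x0: "x0 \<in> K" and min: "\<And>y. y \<in> K \<Longrightarrow> qform n A x0 \<le> qform n A y"
    by (metis continuous_attains_inf empty_iff)
  from x0 obtain i where "i < n" "\<bar>x0 i\<bar> = 1" unfolding K_def by auto
  then have "qform n A x0 > 0" by (intro pd) auto
  moreover have "qform n A x0 \<le> qform n A x"
    if "\<forall>i<n. \<bar>x i\<bar> \<le> 1" "\<exists>i<n. \<bar>x i\<bar> = 1" for x
  proof -
    define y where "y = (\<lambda>i. if i < n then x i else 0)"
    have "y \<in> K" using that unfolding K_def y_def by (auto simp: abs_le_iff)
    moreover have "qform n A y = qform n A x" unfolding y_def by (rule qform_cong) simp
    ultimately show ?thesis using min by metis
  qed
  ultimately show ?thesis by blast
qed

lemma pos_def_qform_coercive: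
  assumes pd: "\<And>x. (\<exists>i<n. x i \<noteq> 0) \<Longrightarrow> qform n A x > 0"
  shows "\<exists>c>0. \<forall>x i. i < n \<longrightarrow> c * (x i)\<^sup>2 \<le> qform n A x"
proof (cases "n = 0")
  case True
  then show ?thesis by (intro exI[of _ 1]) auto
next
  case False
  then obtain c where c: "c > 0"
    and c_le: "\<And>x. \<forall>i<n. \<bar>x i\<bar> \<le> 1 \<Longrightarrow> \<exists>i<n. \<bar>x i\<bar> = 1 \<Longrightarrow> c \<le> qform n A x"
    using pos_def_qform_min_on_cube_boundary[OF pd, of 0] by blast
  have "c * (x i)\<^sup>2 \<le> qform n A x" if "i < n" for x i
  proof -
    define M where "M = Max ((\<lambda>j. \<bar>x j\<bar>) ` {..<n})"
    have M_ge: "\<bar>x j\<bar> \<le> M" if "j < n" for j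
      unfolding M_def using that by (intro Max_ge) auto
    obtain j0 where "j0 < n" "M = \<bar>x j0\<bar>"
      using Max_in[of "(\<lambda>j. \<bar>x j\<bar>) ` {..<n}"] \<open>i < n\<close> unfolding M_def by fastforce
    show ?thesis
    proof (cases "M = 0")
      case True
      then have "\<forall>j<n. x j = 0" using M_ge by force
      then have "qform n A x = qform n A (\<lambda>_. 0)" by (intro qform_cong) simp
      then show ?thesis using \<open>\<forall>j<n. x j = 0\<close> \<open>i < n\<close> by (simp add: qform_def)
    next
      case False
      then have "M > 0" using \<open>M = \<bar>x j0\<bar>\<close> by auto
      have "\<bar>inverse M * x j\<bar> \<le> 1" if "j < n" for j
        using M_ge[OF that] \<open>M > 0\<close> by (simp add: abs_mult divide_le_eq_1 flip: divide_inverse_commute)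
      moreover have "\<bar>inverse M * x j0\<bar> = 1"
        using \<open>M = \<bar>x j0\<bar>\<close> \<open>M > 0\<close> by (simp add: abs_mult)
      ultimately have "c \<le> qform n A (\<lambda>j. inverse M * x j)"
        using \<open>j0 < n\<close> by (intro c_le) auto
      moreover have "qform n A x = M\<^sup>2 * qform n A (\<lambda>j. inverse M * x j)"
        using qform_scaleR[of n A M "\<lambda>j. inverse M * x j"] \<open>M > 0\<close>
        by (simp add: mult.assoc[symmetric])
      ultimately have "c * M\<^sup>2 \<le> qform n A x"
        using \<open>M > 0\<close> by (simp add: mult.commute)
      moreover have "c * (x i)\<^sup>2 \<le> c * M\<^sup>2"
        using power_mono[OF M_ge[OF \<open>i < n\<close>] abs_ge_zero, of 2] \<open>c > 0\<close> by simp
      ultimately show ?thesis by linarith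
    qed
  qed
  then show ?thesis using c by blast
qed

lemma finite_zvecs_box: "finite {k\<in>zvecs n. \<forall>i<n. \<bar>k i\<bar> \<le> b}"
proof -
  have "{k\<in>zvecs n. \<forall>i<n. \<bar>k i\<bar> \<le> b}
          \<subseteq> (\<lambda>f i. if i < n then f i else 0) ` PiE {..<n} (\<lambda>_. {-b..b})"
  proof
    fix k assume k: "k \<in> {k\<in>zvecs n. \<forall>i<n. \<bar>k i\<bar> \<le> b}"
    then have "restrict k {..<n} \<in> PiE {..<n} (\<lambda>_. {-b..b})" by (auto simp: abs_le_iff)
    moreover have "k = (\<lambda>i. if i < n then restrict k {..<n} i else 0)"
      using k unfolding zvecs_def by auto
    ultimately show "k \<in> (\<lambda>f i. if i < n then f i else 0) ` PiE {..<n} (\<lambda>_. {-b..b})" by blast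
  qed
  then show ?thesis by (rule finite_subset) (intro finite_imageI finite_PiE; simp)
qed

lemma finite_level_set:
  assumes "int_pd_qf n Q"
  shows "finite {k\<in>zvecs n. Q k = N}"
proof -
  obtain A where QA: "\<And>k. k \<in> zvecs n \<Longrightarrow> real_of_int (Q k) = qform n A (\<lambda>i. real_of_int (k i))"
    and pd: "\<And>x. (\<exists>i<n. x i \<noteq> 0) \<Longrightarrow> qform n A x > 0"
    using assms unfolding int_pd_qf_iff by blast
  obtain c where "c > 0" and coercive: "\<And>x i. i < n \<Longrightarrow> c * (x i)\<^sup>2 \<le> qform n A x"
    using pos_def_qform_coercive[OF pd] by blast
  define R where "R = sqrt (\<bar>real_of_int N\<bar> / c)"
  have "\<bar>k i\<bar> \<le> \<lceil>R\<rceil>" if "k \<in> zvecs n" "Q k = N" "i < n" for k i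
  proof -
    have "c * (real_of_int (k i))\<^sup>2 \<le> real_of_int N"
      using coercive[OF \<open>i < n\<close>] QA[OF \<open>k \<in> zvecs n\<close>] \<open>Q k = N\<close> by simp
    then have "(real_of_int (k i))\<^sup>2 \<le> \<bar>real_of_int N\<bar> / c"
      using \<open>c > 0\<close> by (simp add: field_simps)
    then have "\<bar>real_of_int (k i)\<bar> \<le> R"
      unfolding R_def by (metis real_sqrt_abs real_sqrt_le_mono)
    then show ?thesis by linarith
  qed
  then have "{k\<in>zvecs n. Q k = N} \<subseteq> {k\<in>zvecs n. \<forall>i<n. \<bar>k i\<bar> \<le> \<lceil>R\<rceil>}" by auto
  then show ?thesis using finite_zvecs_box finite_subset by blast
qed

lemma Z_comb_thetas_zero: "Z_comb_thetas n 0"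
  unfolding Z_comb_thetas_def by (intro exI[of _ "[]"]) simp

lemma Z_comb_thetas_theta: "int_pd_qf n Q \<Longrightarrow> Z_comb_thetas n (theta n Q)"
  unfolding Z_comb_thetas_def by (intro exI[of _ "[(1, Q)]"]) auto

lemma Z_comb_thetas_add:
  assumes "Z_comb_thetas n F" and "Z_comb_thetas n G"
  shows "Z_comb_thetas n (F + G)"
proof -
  obtain cs ds where "\<forall>(c, Q')\<in>set cs. int_pd_qf n Q'" "F = (\<Sum>(c, Q')\<leftarrow>cs. fps_const c * theta n Q')"
    and "\<forall>(c, Q')\<in>set ds. int_pd_qf n Q'" "G = (\<Sum>(c, Q')\<leftarrow>ds. fps_const c * theta n Q')"
    using assms unfolding Z_comb_thetas_def by blast
  then show ?thesis unfolding Z_comb_thetas_def by (intro exI[of _ "cs @ ds"]) auto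
qed

lemma Z_comb_thetas_const_mult:
  assumes "Z_comb_thetas n F"
  shows "Z_comb_thetas n (fps_const a * F)"
proof -
  obtain cs where "\<forall>(c, Q')\<in>set cs. int_pd_qf n Q'"
    and F: "F = (\<Sum>(c, Q')\<leftarrow>cs. fps_const c * theta n Q')"
    using assms unfolding Z_comb_thetas_def by blast
  moreover have "fps_const a * F = (\<Sum>(c, Q')\<leftarrow>map (\<lambda>(c, Q'). (a * c, Q')) cs. fps_const c * theta n Q')"
    unfolding F by (simp add: sum_list_const_mult[symmetric] o_def case_prod_beta mult.assoc
        flip: fps_const_mult)
  ultimately show ?thesis
    unfolding Z_comb_thetas_def by (intro exI[of _ "map (\<lambda>(c, Q'). (a * c, Q')) cs"]) auto
qed

lemma Z_comb_thetas_diff: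
  assumes "Z_comb_thetas n F" and "Z_comb_thetas n G"
  shows "Z_comb_thetas n (F - G)"
proof -
  have "F - G = F + fps_const (-1) * G"
    by (simp add: fps_const_neg[symmetric] del: fps_const_neg)
  then show ?thesis using assms by (simp only: Z_comb_thetas_add Z_comb_thetas_const_mult)
qed

lemma Z_comb_thetas_sum:
  "finite I \<Longrightarrow> (\<And>i. i \<in> I \<Longrightarrow> Z_comb_thetas n (F i)) \<Longrightarrow> Z_comb_thetas n (\<Sum>i\<in>I. F i)"
  by (induction I rule: finite_induct) (auto intro: Z_comb_thetas_add Z_comb_thetas_zero)

lemma theta_set_UN_disjoint:
  assumes "finite I" and "\<And>i j. i \<in> I \<Longrightarrow> j \<in> I \<Longrightarrow> i \<noteq> j \<Longrightarrow> S i \<inter> S j = {}"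
    and "\<And>i N. i \<in> I \<Longrightarrow> finite {k\<in>S i. Q k = N}"
  shows "theta_set Q (\<Union>i\<in>I. S i) = (\<Sum>i\<in>I. theta_set Q (S i))"
proof (rule fps_ext)
  fix N
  have "{k\<in>(\<Union>i\<in>I. S i). Q k = int N} = (\<Union>i\<in>I. {k\<in>S i. Q k = int N})" by auto
  then have "card {k\<in>(\<Union>i\<in>I. S i). Q k = int N} = (\<Sum>i\<in>I. card {k\<in>S i. Q k = int N})"
    using assms by (auto intro!: card_UN_disjoint)
  then show "fps_nth (theta_set Q (\<Union>i\<in>I. S i)) N = fps_nth (\<Sum>i\<in>I. theta_set Q (S i)) N"
    unfolding theta_set_def by (simp add: fps_sum_nth)
qed

lemma theta_set_bij_betw:
  assumes "bij_betw f A B"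
  shows "theta_set Q B = theta_set (Q \<circ> f) A"
proof (rule fps_ext)
  fix N
  have "bij_betw f {k\<in>A. Q (f k) = int N} {k\<in>B. Q k = int N}"
    using assms by (auto simp: bij_betw_def inj_on_def image_iff)
  then show "fps_nth (theta_set Q B) N = fps_nth (theta_set (Q \<circ> f) A) N"
    unfolding theta_set_def by (simp add: bij_betw_same_card)
qed

lemma int_pd_qf_rescale_coords:
  assumes "int_pd_qf n Q" and s: "\<And>i. i < n \<Longrightarrow> s i \<noteq> 0"
  shows "int_pd_qf n (\<lambda>k. Q (\<lambda>i. s i * k i))"
proof -
  obtain A where sym: "\<forall>i j. A i j = A j i"
    and QA: "\<forall>k\<in>zvecs n. real_of_int (Q k) = qform n A (\<lambda>i. real_of_int (k i))"
    and pd: "\<forall>x. (\<exists>i<n. x i \<noteq> 0) \<longrightarrow> qform n A x > 0"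
    using assms(1) unfolding int_pd_qf_iff by blast
  define A' where "A' = (\<lambda>i j. A i j * real_of_int (s i) * real_of_int (s j))"
  have "\<forall>i j. A' i j = A' j i"
    using sym unfolding A'_def by (simp add: ac_simps)
  moreover have "real_of_int (Q (\<lambda>i. s i * k i)) = qform n A' (\<lambda>i. real_of_int (k i))"
    if "k \<in> zvecs n" for k
  proof -
    have "(\<lambda>i. s i * k i) \<in> zvecs n" using that unfolding zvecs_def by simp
    then have "real_of_int (Q (\<lambda>i. s i * k i)) = qform n A (\<lambda>i. real_of_int (s i) * real_of_int (k i))"
      using QA by simp
    then show ?thesis unfolding A'_def by (simp only: qform_rescale_coords)
  qed
  moreover have "qform n A' x > 0" if "\<exists>i<n. x i \<noteq> 0" for x
  proof -
    have "\<exists>i<n. real_of_int (s i) * x i \<noteq> 0" using that s by auto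
    then show ?thesis using pd[rule_format, of "\<lambda>i. real_of_int (s i) * x i"]
      unfolding A'_def by (simp only: qform_rescale_coords)
  qed
  ultimately show ?thesis
    unfolding int_pd_qf_iff by blast
qed

lemma bij_betw_scale_first_coord:
  fixes d :: int
  assumes "d \<noteq> 0"
  shows "bij_betw (\<lambda>k i. (if i = 0 then d else 1) * k i) (zvecs n) {k\<in>zvecs n. d dvd k 0}"
  by (rule bij_betw_byWitness[where f' = "\<lambda>k. k(0 := k 0 div d)"])
     (use assms in \<open>auto simp: zvecs_def\<close>)

lemma Z_comb_thetas_first_coord_multiples:
  fixes d :: int
  assumes "int_pd_qf n Q" and "d \<noteq> 0"
  shows "Z_comb_thetas n (theta_set Q {k\<in>zvecs n. d dvd k 0})"
proof -
  have "theta_set Q {k\<in>zvecs n. d dvd k 0} = theta n (\<lambda>k. Q (\<lambda>i. (if i = 0 then d else 1) * k i))"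
    unfolding theta_def using theta_set_bij_betw[OF bij_betw_scale_first_coord[OF \<open>d \<noteq> 0\<close>]]
    by (simp add: o_def)
  moreover have "int_pd_qf n (\<lambda>k. Q (\<lambda>i. (if i = 0 then d else 1) * k i))"
    using assms by (intro int_pd_qf_rescale_coords) auto
  ultimately show ?thesis by (simp add: Z_comb_thetas_theta)
qed

lemma first_coord_multiples_eq_UN_gcd:
  assumes "d dvd m"
  shows "{k\<in>zvecs n. int d dvd k 0} =
           (\<Union>e\<in>{e. d dvd e \<and> e dvd m}. {k\<in>zvecs n. gcd (k 0) (int m) = int e})"
proof (intro equalityI subsetI)
  fix k assume k: "k \<in> {k\<in>zvecs n. int d dvd k 0}"
  define e where "e = nat (gcd (k 0) (int m))"
  have e: "int e = gcd (k 0) (int m)" unfolding e_def by simp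
  then have "int e dvd int m" "int d dvd int e" using k assms by auto
  then have "e \<in> {e. d dvd e \<and> e dvd m}" by simp
  with e k show "k \<in> (\<Union>e\<in>{e. d dvd e \<and> e dvd m}. {k\<in>zvecs n. gcd (k 0) (int m) = int e})"
    by auto
next
  fix k assume "k \<in> (\<Union>e\<in>{e. d dvd e \<and> e dvd m}. {k\<in>zvecs n. gcd (k 0) (int m) = int e})"
  then obtain e where "d dvd e" "k \<in> zvecs n" "gcd (k 0) (int m) = int e" by auto
  moreover have "int e dvd k 0" unfolding \<open>gcd (k 0) (int m) = int e\<close>[symmetric] by simp
  ultimately show "k \<in> {k\<in>zvecs n. int d dvd k 0}" by (auto dest: dvd_trans[OF int_dvd_int_iff[THEN iffD2]])
qed

lemma Z_comb_thetas_gcd_first_coord: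
  assumes "m > 0" and Q: "int_pd_qf n Q"
  shows "d > 0 \<Longrightarrow> d dvd m \<Longrightarrow> Z_comb_thetas n (theta_set Q {k\<in>zvecs n. gcd (k 0) (int m) = int d})"
proof (induction "m - d" arbitrary: d rule: less_induct)
  case less
  define S where "S = (\<lambda>e::nat. {k\<in>zvecs n. gcd (k 0) (int m) = int e})"
  define D where "D = {e. d dvd e \<and> e dvd m}"
  have "finite D" unfolding D_def using \<open>m > 0\<close>
    by (auto intro: finite_subset[of _ "{..m}"] dest: dvd_imp_le)
  have "d \<in> D" unfolding D_def using less by simp
  have "theta_set Q {k\<in>zvecs n. int d dvd k 0} = (\<Sum>e\<in>D. theta_set Q (S e))"
    unfolding first_coord_multiples_eq_UN_gcd[OF \<open>d dvd m\<close>] S_def D_def[symmetric]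
  proof (rule theta_set_UN_disjoint)
    fix e N
    show "finite {k\<in>{k\<in>zvecs n. gcd (k 0) (int m) = int e}. Q k = N}"
      by (rule finite_subset[OF _ finite_level_set[OF Q, of N]]) auto
  qed (use \<open>finite D\<close> in auto)
  also have "\<dots> = theta_set Q (S d) + (\<Sum>e\<in>D-{d}. theta_set Q (S e))"
    using sum.remove[OF \<open>finite D\<close> \<open>d \<in> D\<close>] by simp
  finally have S_d: "theta_set Q (S d) =
      theta_set Q {k\<in>zvecs n. int d dvd k 0} - (\<Sum>e\<in>D-{d}. theta_set Q (S e))"
    by simp
  have "Z_comb_thetas n (theta_set Q (S e))" if "e \<in> D - {d}" for e
  proof -
    have "d dvd e" "e dvd m" "e \<noteq> d" using that unfolding D_def by auto
    then have "e > 0" using \<open>m > 0\<close> by (cases e) auto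
    then have "m - e < m - d"
      using dvd_imp_le[OF \<open>d dvd e\<close>] dvd_imp_le[OF \<open>e dvd m\<close> \<open>m > 0\<close>] \<open>e \<noteq> d\<close> by linarith
    then show ?thesis unfolding S_def using less(1) \<open>e > 0\<close> \<open>e dvd m\<close> by blast
  qed
  then have "Z_comb_thetas n (\<Sum>e\<in>D-{d}. theta_set Q (S e))"
    using \<open>finite D\<close> by (intro Z_comb_thetas_sum) auto
  moreover have "Z_comb_thetas n (theta_set Q {k\<in>zvecs n. int d dvd k 0})"
    using Z_comb_thetas_first_coord_multiples[OF Q] \<open>d > 0\<close> by simp
  ultimately have "Z_comb_thetas n (theta_set Q (S d))"
    unfolding S_d by (intro Z_comb_thetas_diff)
  then show ?case unfolding S_def .
qed

theorem lemma3p4: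
  fixes n m d :: nat and Q :: "(nat \<Rightarrow> int) \<Rightarrow> int"
  assumes "n > 0" and "m > 0" and "int_pd_qf n Q"
    and "d > 0" and "d dvd m"
  shows "Z_comb_thetas n (theta_set Q {k\<in>zvecs n. int d dvd k 0})
       \<and> Z_comb_thetas n (theta_set Q {k\<in>zvecs n. gcd (k 0) (int m) = int d})"
  using Z_comb_thetas_first_coord_multiples[OF \<open>int_pd_qf n Q\<close>, of "int d"]
    Z_comb_thetas_gcd_first_coord[OF \<open>m > 0\<close> \<open>int_pd_qf n Q\<close> \<open>d > 0\<close> \<open>d dvd m\<close>]
    \<open>d > 0\<close> by simp

end
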